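(* Let $q$ be a prime power, $n,k,m$ positive integers, and let $\mathcal C_1,\mathcal C_2$ be two $[n,k,n-k+1]_{q^m/q}$ MRD codes. Then $\mathcal C_1\oplus\mathcal C_2=\{(u\mid v): u\in\mathcal C_1,v\in\mathcal C_2\}\subseteq\mathbb F_{q^m}^{2n}$ is a $[2n,2k]_{q^m/q}$ code whose generalized rank weights are $$d_i(\mathcal C_1\oplus\mathcal C_2)=\begin{cases} n-k+i & \text{if } 1\le i\le k,\\ 2n-2k+i & \text{if } k+1\le i\le 2k.\end{cases}$$
   Context: An $[n,k,d]_{q^m/q}$ code is a $k$-dimensional $\mathbb F_{q^m}$-subspace of $\mathbb F_{q^m}^n$ with minimum rank distance $d$, where the rank weight of $v=(v_1,\ldots,v_n)$ is $\dim_{\mathbb F_q}\langle v_1,\ldots,v_n\rangle_{\mathbb F_q}$ and $d$ is the minimum rank weight of a nonzero codeword. It is MRD if $mk=\min\{m(n-d+1),n(m-d+1)\}$. An $\mathbb F_{q^m}$-subspace $\mathcal A\subseteq\mathbb F_{q^m}^N$ is Galois closed if it is invariant under the coordinatewise $q$-Frobenius map; the $j$-th generalized rank weight of a code $\mathcal C\subseteq\mathbb F_{q^m}^N$ is $d_j(\mathcal C)=\min\{\dim_{\mathbb F_{q^m}}\mathcal A:\mathcal A\text{ Galois closed},\ \dim_{\mathbb F_{q^m}}(\mathcal A\cap\mathcal C)\ge j\}$. *)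

theory Defs
  imports Complex_Main "HOL-Computational_Algebra.Primes" "HOL-Library.Function_Algebras"
begin

text \<open>The field F_(q^m) is a finite field type 'a with CARD('a) = q^m.
 The subfield F_q is the set of fixed points of the q-Frobenius x \<mapsto> x^q.
 Vectors of length N are functions nat \<Rightarrow> 'a vanishing outside {0..<N}.\<close>

definition prime_power :: "nat \<Rightarrow> bool" where
  "prime_power q \<longleftrightarrow> (\<exists>p e. prime p \<and> e > 0 \<and> q = p ^ e)"

definition vscale :: "'a::field \<Rightarrow> (nat \<Rightarrow> 'a) \<Rightarrow> (nat \<Rightarrow> 'a)" where
  "vscale c v = (\<lambda>i. c * v i)"

interpretation fvs: vector_space "vscale :: 'a::field \<Rightarrow> (nat \<Rightarrow> 'a) \<Rightarrow> (nat \<Rightarrow> 'a)"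
  by unfold_locales (auto simp: vscale_def fun_eq_iff algebra_simps)

definition vecs :: "nat \<Rightarrow> (nat \<Rightarrow> 'a::zero) set" where
  "vecs N = {v. \<forall>i\<ge>N. v i = 0}"

definition Fq_indep :: "nat \<Rightarrow> 'a::field set \<Rightarrow> bool" where
  "Fq_indep q S \<longleftrightarrow> finite S \<and>
     (\<forall>c. (\<forall>x\<in>S. c x ^ q = c x) \<longrightarrow> (\<Sum>x\<in>S. c x * x) = 0 \<longrightarrow> (\<forall>x\<in>S. c x = 0))"

definition Fq_dim :: "nat \<Rightarrow> 'a::{field,finite} set \<Rightarrow> nat" where
  "Fq_dim q A = Max {card S | S. S \<subseteq> A \<and> Fq_indep q S}"

definition rank_weight :: "nat \<Rightarrow> nat \<Rightarrow> (nat \<Rightarrow> 'a::{field,finite}) \<Rightarrow> nat" where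
  "rank_weight q N v = Fq_dim q (v ` {..<N})"

definition min_rank_dist :: "nat \<Rightarrow> nat \<Rightarrow> (nat \<Rightarrow> 'a::{field,finite}) set \<Rightarrow> nat" where
  "min_rank_dist q N C = Min {rank_weight q N v | v. v \<in> C \<and> v \<noteq> 0}"

definition is_code :: "nat \<Rightarrow> nat \<Rightarrow> (nat \<Rightarrow> 'a::field) set \<Rightarrow> bool" where
  "is_code N k C \<longleftrightarrow> fvs.subspace C \<and> C \<subseteq> vecs N \<and> fvs.dim C = k"

definition is_code_d :: "nat \<Rightarrow> nat \<Rightarrow> nat \<Rightarrow> nat \<Rightarrow> (nat \<Rightarrow> 'a::{field,finite}) set \<Rightarrow> bool" where
  "is_code_d q N k d C \<longleftrightarrow> is_code N k C \<and> min_rank_dist q N C = d"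

definition is_MRD :: "nat \<Rightarrow> nat \<Rightarrow> nat \<Rightarrow> nat \<Rightarrow> nat \<Rightarrow> (nat \<Rightarrow> 'a::{field,finite}) set \<Rightarrow> bool" where
  "is_MRD q m N k d C \<longleftrightarrow> is_code_d q N k d C \<and>
     m * k = min (m * (N - d + 1)) (N * (m - d + 1))"

definition frob :: "nat \<Rightarrow> (nat \<Rightarrow> 'a::field) \<Rightarrow> (nat \<Rightarrow> 'a)" where
  "frob q v = (\<lambda>i. v i ^ q)"

definition galois_closed :: "nat \<Rightarrow> (nat \<Rightarrow> 'a::field) set \<Rightarrow> bool" where
  "galois_closed q A \<longleftrightarrow> (\<forall>v\<in>A. frob q v \<in> A)"

definition gen_rank_weight :: "nat \<Rightarrow> nat \<Rightarrow> (nat \<Rightarrow> 'a::{field,finite}) set \<Rightarrow> nat \<Rightarrow> nat" where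
  "gen_rank_weight q N C j = Min {fvs.dim A | A. fvs.subspace A \<and> A \<subseteq> vecs N \<and>
      galois_closed q A \<and> fvs.dim (A \<inter> C) \<ge> j}"

definition concat_vec :: "nat \<Rightarrow> (nat \<Rightarrow> 'a) \<Rightarrow> (nat \<Rightarrow> 'a) \<Rightarrow> (nat \<Rightarrow> 'a)" where
  "concat_vec n u v = (\<lambda>i. if i < n then u i else v (i - n))"

definition code_dsum :: "nat \<Rightarrow> (nat \<Rightarrow> 'a) set \<Rightarrow> (nat \<Rightarrow> 'a) set \<Rightarrow> (nat \<Rightarrow> 'a) set" where
  "code_dsum n C1 C2 = {concat_vec n u v | u v. u \<in> C1 \<and> v \<in> C2}"

end

theory Submission
  imports Defs "HOL-Number_Theory.Residues"
begin

text \<open>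
  The weights are pinned down by matching bounds.
  For the upper bound, the Galois closed space of vectors supported on the first \<open>t\<close> coordinates
  meets \<open>C1 \<oplus> C2\<close> in a large subspace, since cutting an \<open>[n, k]\<close> code down to its first
  \<open>s\<close> coordinates loses at most \<open>n - s\<close> dimensions.
  For the lower bound, the rows of the reduced echelon generator matrix of a Galois closed space
  are fixed by Frobenius, so they have entries in \<open>F_q\<close> and every vector of the space has rank
  weight at most its dimension. Cutting by coordinate hyperplanes then shows that a Galois closed
  space meeting a code of minimum distance \<open>d\<close> in dimension \<open>j\<close> has dimension at least
  \<open>d + j - 1\<close>. Finally, projecting a Galois closed \<open>A\<close> onto the second block splits \<open>A\<close> into two
  Galois closed pieces, meeting \<open>C1 \<oplus> C2\<close> and \<open>C2\<close> respectively; each nonzero piece contributes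
  \<open>n - k\<close> to the bound, and for \<open>i > k\<close> both pieces are nonzero.
\<close>

section \<open>Finitely spanned subspaces\<close>

text \<open>The ambient space \<open>nat \<Rightarrow> 'a\<close> of \<open>fvs\<close> is infinite-dimensional, so finite dimension
  is tracked per subspace.\<close>

definition finitely_spanned :: "('a::field \<Rightarrow> 'b \<Rightarrow> 'b::ab_group_add) \<Rightarrow> 'b set \<Rightarrow> bool" where
  "finitely_spanned s V \<longleftrightarrow> (\<exists>F. finite F \<and> V \<subseteq> module.span s F)"

context vector_space
begin

lemma finitely_spanned_independent_finite:
  "finitely_spanned scale V \<Longrightarrow> B \<subseteq> V \<Longrightarrow> independent B \<Longrightarrow> finite B"
  unfolding finitely_spanned_def using independent_span_bound by blast

lemma finitely_spanned_independent_card_le_dim: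
  assumes "finitely_spanned scale V" "B \<subseteq> V" "independent B"
  shows "card B \<le> dim V"
proof -
  obtain B' where B': "B \<subseteq> B'" "B' \<subseteq> V" "independent B'" "V \<subseteq> span B'"
    using maximal_independent_subset_extend assms(2,3) by blast
  have "finite B'" using finitely_spanned_independent_finite[OF assms(1) B'(2,3)] .
  then have "card B \<le> card B'" using B'(1) card_mono by blast
  also have "\<dots> = dim V" using basis_card_eq_dim B'(2-4) by blast
  finally show ?thesis .
qed

lemma finitely_spanned_dim_subset: "finitely_spanned scale W \<Longrightarrow> V \<subseteq> W \<Longrightarrow> dim V \<le> dim W"
  by (metis basis_exists finitely_spanned_independent_card_le_dim subset_trans)

lemma finitely_spanned_dim_pos: "finitely_spanned scale V \<Longrightarrow> x \<in> V \<Longrightarrow> x \<noteq> 0 \<Longrightarrow> 0 < dim V"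
  using finitely_spanned_independent_card_le_dim[of V "{x}"] by simp

lemma dim_eq_0_if_subset_zero: "V \<subseteq> {0} \<Longrightarrow> dim V = 0"
  using dim_le_card[of V "{}"] by simp

lemma ex_nonzero_if_dim_pos: "0 < dim V \<Longrightarrow> \<exists>x\<in>V. x \<noteq> 0"
  using dim_eq_0_if_subset_zero by fastforce

lemma independent_span_disjoint:
  assumes "independent B" "finite B" "B0 \<subseteq> B" "x \<in> span B0" "x \<in> span (B - B0)"
  shows "x = 0"
proof -
  obtain a where a: "x = (\<Sum>v\<in>B0. scale (a v) v)"
    using assms(4) span_finite[OF finite_subset[OF assms(3,2)]] by auto
  obtain c where c: "x = (\<Sum>v\<in>B - B0. scale (c v) v)"
    using assms(5) span_finite[of "B - B0"] assms(2) by auto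
  define u where "u v = (if v \<in> B0 then a v else - c v)" for v
  have "(\<Sum>v\<in>B. scale (u v) v) = (\<Sum>v\<in>B0. scale (u v) v) + (\<Sum>v\<in>B - B0. scale (u v) v)"
    using sum.subset_diff[OF assms(3,2)] by (simp add: add.commute)
  also have "\<dots> = x + - x"
    using a c by (simp add: u_def scale_minus_left sum_negf)
  finally have "(\<Sum>v\<in>B. scale (u v) v) = 0" by simp
  then have "\<forall>v\<in>B0. u v = 0" using independentD[OF assms(1,2) subset_refl] assms(3) by blast
  then show ?thesis unfolding a by (simp add: u_def)
qed

end

context vector_space_pair
begin

lemma rank_nullity:
  assumes lin: "Vector_Spaces.linear s1 s2 f" and V: "vs1.subspace V" "finitely_spanned s1 V"
  shows "vs1.dim V = vs1.dim {x\<in>V. f x = 0} + vs2.dim (f ` V)"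
proof -
  interpret lf: Vector_Spaces.linear s1 s2 f by (rule lin)
  define K where "K = {x\<in>V. f x = 0}"
  obtain B0 where B0: "B0 \<subseteq> K" "vs1.independent B0" "K \<subseteq> vs1.span B0" "card B0 = vs1.dim K"
    using vs1.basis_exists by blast
  obtain B where B: "B0 \<subseteq> B" "B \<subseteq> V" "vs1.independent B" "V \<subseteq> vs1.span B"
    using vs1.maximal_independent_subset_extend[of B0 V] B0(1,2) K_def by blast
  have fin_B: "finite B" using vs1.finitely_spanned_independent_finite[OF V(2) B(2,3)] .
  define B1 where "B1 = B - B0"
  have span_B1: "vs1.span B1 \<subseteq> V"
    using B(2) V(1) B1_def by (intro vs1.span_minimal) auto
  have image: "f ` V = vs2.span (f ` B1)"
  proof
    show "vs2.span (f ` B1) \<subseteq> f ` V" using span_B1 lf.span_image by auto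
    have "f ` B \<subseteq> insert 0 (f ` B1)" using B0(1) K_def B1_def by auto
    then have "vs2.span (f ` B) \<subseteq> vs2.span (f ` B1)"
      by (metis vs2.span_insert_0 vs2.span_mono)
    moreover have "f ` V \<subseteq> vs2.span (f ` B)" using B(4) lf.span_image by auto
    ultimately show "f ` V \<subseteq> vs2.span (f ` B1)" by blast
  qed
  have inj: "inj_on f (vs1.span B1)"
  proof (subst lf.inj_on_iff_eq_0[OF vs1.subspace_span], intro ballI impI)
    fix x assume x: "x \<in> vs1.span B1" "f x = 0"
    then have "x \<in> vs1.span B0" using span_B1 K_def B0(3) by blast
    then show "x = 0" using vs1.independent_span_disjoint[OF B(3) fin_B B(1)] x(1) B1_def by blast
  qed
  have "vs2.dim (f ` V) = card (f ` B1)"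
    using image vs2.dim_span_eq_card_independent
      lf.independent_injective_image[OF vs1.independent_mono[OF B(3)] inj] B1_def by auto
  also have "\<dots> = card B1"
    using card_image inj_on_subset[OF inj vs1.span_superset] by blast
  also have "\<dots> = card B - card B0"
    using B1_def B(1) fin_B by (simp add: card_Diff_subset finite_subset)
  finally show ?thesis
    using vs1.basis_card_eq_dim[OF B(2,4,3)] B0(4) K_def card_mono[OF fin_B B(1)] by simp
qed

end

section \<open>Vectors of finite length\<close>

interpretation fvs_pair: vector_space_pair "vscale :: 'a::field \<Rightarrow> _" "vscale :: 'a \<Rightarrow> _" ..

lemma vscale_apply: "vscale c v i = c * v i"
  by (simp add: vscale_def)

lemma vscale_sum_apply: "(\<Sum>x\<in>S. vscale (c x) (g x :: nat \<Rightarrow> 'a::field)) i = (\<Sum>x\<in>S. c x * g x i)"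
  by (induction S rule: infinite_finite_induct) (auto simp: vscale_apply)

lemma fvs_linearI:
  assumes "\<And>x y. f (x + y) = f x + f y" "\<And>c x. f (vscale c x) = vscale c (f x)"
  shows "Vector_Spaces.linear (vscale :: 'a::field \<Rightarrow> _) vscale f"
  using assms fvs.vector_space_axioms by (simp add: Vector_Spaces.linear_iff)

definition unit_vec :: "nat \<Rightarrow> nat \<Rightarrow> 'a::field" where
  "unit_vec l = (\<lambda>i. if i = l then 1 else 0)"

lemma vecs_subset_span_unit_vecs: "vecs N \<subseteq> fvs.span (unit_vec ` {..<N} :: (nat \<Rightarrow> 'a::field) set)"
proof
  fix v :: "nat \<Rightarrow> 'a" assume v: "v \<in> vecs N"
  have "v = (\<Sum>l<N. vscale (v l) (unit_vec l))"
    using v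
    by (auto simp: fun_eq_iff vscale_sum_apply unit_vec_def vecs_def if_distrib cong: if_cong)
  also have "\<dots> \<in> fvs.span (unit_vec ` {..<N})"
    by (intro fvs.span_sum fvs.span_scale fvs.span_base) auto
  finally show "v \<in> fvs.span (unit_vec ` {..<N})" .
qed

lemma finitely_spanned_vecs: "V \<subseteq> vecs N \<Longrightarrow> finitely_spanned vscale (V :: (nat \<Rightarrow> 'a::field) set)"
  unfolding finitely_spanned_def using vecs_subset_span_unit_vecs by blast

lemma dim_le_if_subset_vecs:
  assumes "V \<subseteq> vecs N"
  shows "fvs.dim (V :: (nat \<Rightarrow> 'a::field) set) \<le> N"
proof -
  have "fvs.dim V \<le> card (unit_vec ` {..<N} :: (nat \<Rightarrow> 'a) set)"
    using assms vecs_subset_span_unit_vecs by (intro fvs.dim_le_card) auto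
  also have "\<dots> \<le> N" using card_image_le[of "{..<N}"] by simp
  finally show ?thesis .
qed

lemma subspace_vecs: "fvs.subspace (vecs N :: (nat \<Rightarrow> 'a::field) set)"
  by (auto simp: fvs.subspace_def vecs_def vscale_apply)

lemma vecs_mono: "t \<le> N \<Longrightarrow> vecs t \<subseteq> vecs N"
  by (auto simp: vecs_def)

lemma galois_closed_vecs: "0 < q \<Longrightarrow> galois_closed q (vecs N :: (nat \<Rightarrow> 'a::field) set)"
  by (auto simp: galois_closed_def vecs_def frob_def)

lemma subspace_coordinate_hyperplane:
  "fvs.subspace V \<Longrightarrow> fvs.subspace {x \<in> V. x l = (0::'a::field)}"
  by (simp add: fvs.subspace_def vscale_apply)

lemma dim_coordinate_hyperplane:
  fixes V :: "(nat \<Rightarrow> 'a::field) set"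
  assumes "fvs.subspace V" "V \<subseteq> vecs N"
  shows "fvs.dim V \<le> fvs.dim {x\<in>V. x l = 0} + 1"
    and "c \<in> V \<Longrightarrow> c l \<noteq> 0 \<Longrightarrow> fvs.dim V = fvs.dim {x\<in>V. x l = 0} + 1"
proof -
  define f :: "(nat \<Rightarrow> 'a) \<Rightarrow> nat \<Rightarrow> 'a" where "f x = vscale (x l) (unit_vec 0)" for x
  have "Vector_Spaces.linear vscale vscale f"
    by (rule fvs_linearI) (auto simp: f_def vscale_apply fun_eq_iff algebra_simps)
  then have "fvs.dim V = fvs.dim {x\<in>V. f x = 0} + fvs.dim (f ` V)"
    using fvs_pair.rank_nullity assms finitely_spanned_vecs by blast
  moreover have "{x\<in>V. f x = 0} = {x\<in>V. x l = 0}"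
    by (auto simp: f_def fun_eq_iff unit_vec_def vscale_apply)
  ultimately have rank_nullity: "fvs.dim V = fvs.dim {x\<in>V. x l = 0} + fvs.dim (f ` V)"
    by simp
  have "fvs.dim (f ` V) \<le> 1"
    using fvs.dim_le_card[of "f ` V" "{unit_vec 0}"]
    by (auto simp: f_def intro: fvs.span_base fvs.span_scale)
  then show "fvs.dim V \<le> fvs.dim {x\<in>V. x l = 0} + 1" using rank_nullity by simp
  assume "c \<in> V" "c l \<noteq> 0"
  then have "0 < fvs.dim (f ` V)"
    by (intro fvs.finitely_spanned_dim_pos[of _ "f c"] finitely_spanned_vecs[of _ 1])
      (auto simp: f_def vecs_def unit_vec_def fun_eq_iff vscale_apply)
  with rank_nullity \<open>fvs.dim (f ` V) \<le> 1\<close> show "fvs.dim V = fvs.dim {x\<in>V. x l = 0} + 1" by simp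
qed

lemma dim_le_dim_inter_vecs:
  fixes V :: "(nat \<Rightarrow> 'a::field) set"
  assumes "fvs.subspace V" "V \<subseteq> vecs N"
  shows "fvs.dim V \<le> fvs.dim (V \<inter> vecs t) + (N - t)"
proof (cases "t \<le> N")
  case True
  then show ?thesis
  proof (induction t rule: inc_induct)
    case base
    then show ?case using assms(2) by (simp add: Int_absorb2)
  next
    case (step t)
    have "V \<inter> vecs t = {x \<in> V \<inter> vecs (Suc t). x t = 0}"
      by (auto simp: vecs_def) (metis le_antisym not_less_eq_eq)
    moreover have "fvs.dim (V \<inter> vecs (Suc t)) \<le> fvs.dim {x \<in> V \<inter> vecs (Suc t). x t = 0} + 1"
      using assms by (intro dim_coordinate_hyperplane(1)[of _ N])
        (auto intro: fvs.subspace_inter subspace_vecs)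
    ultimately show ?case using step.IH step.hyps by simp
  qed
next
  case False
  then have "V \<inter> vecs t = V" using assms(2) vecs_mono[of N t] by auto
  then show ?thesis by simp
qed

text \<open>The vectors \<open>W j\<close> are the rows of the reduced echelon generator matrix of \<open>B\<close>,
  with pivot columns \<open>J\<close>.\<close>

lemma pivot_vectors_exist:
  fixes B :: "(nat \<Rightarrow> 'a::field) set"
  assumes B: "fvs.subspace B" "B \<subseteq> vecs N"
  obtains J W where "finite J" "\<And>j. j \<in> J \<Longrightarrow> W j \<in> B"
    "\<And>j j'. j \<in> J \<Longrightarrow> j' \<in> J \<Longrightarrow> W j j' = (if j' = j then 1 else 0)"
    "\<And>w. w \<in> B \<Longrightarrow> \<forall>j\<in>J. w j = 0 \<Longrightarrow> w = 0"
proof -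
  define determines where "determines J \<longleftrightarrow> (\<forall>w\<in>B. (\<forall>j\<in>J. w j = 0) \<longrightarrow> w = 0)" for J
  have "determines {..<N}"
    unfolding determines_def
  proof (intro ballI impI)
    fix w assume w: "w \<in> B" "\<forall>j\<in>{..<N}. w j = 0"
    show "w = 0"
    proof
      fix i show "w i = 0 i" using w B(2) by (cases "i < N") (auto simp: vecs_def)
    qed
  qed
  then obtain J where J: "finite J" "determines J"
    and minimal: "\<And>J'. finite J' \<Longrightarrow> determines J' \<Longrightarrow> card J \<le> card J'"
    using ex_has_least_nat[of "\<lambda>J. finite J \<and> determines J" "{..<N}" card] by blast
  have "\<forall>j\<in>J. \<exists>w. w \<in> B \<and> (\<forall>j'\<in>J. w j' = (if j' = j then 1 else 0))"
  proof
    fix j assume j: "j \<in> J"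
    have "\<not> determines (J - {j})"
      using minimal[of "J - {j}"] card_Diff1_less[OF J(1) j] J(1) by auto
    then obtain w where w: "w \<in> B" "\<forall>j'\<in>J - {j}. w j' = 0" "w \<noteq> 0"
      unfolding determines_def by blast
    then have "w j \<noteq> 0" using J(2) j unfolding determines_def by blast
    then show "\<exists>w. w \<in> B \<and> (\<forall>j'\<in>J. w j' = (if j' = j then 1 else 0))"
      using w by (intro exI[of _ "vscale (inverse (w j)) w"] conjI fvs.subspace_scale[OF B(1)])
        (auto simp: vscale_apply)
  qed
  then obtain W where W: "\<And>j. j \<in> J \<Longrightarrow> W j \<in> B"
    and unit: "\<And>j j'. j \<in> J \<Longrightarrow> j' \<in> J \<Longrightarrow> W j j' = (if j' = j then 1 else 0)"
    using bchoice[of J "\<lambda>j w. w \<in> B \<and> (\<forall>j'\<in>J. w j' = (if j' = j then 1 else 0))"] by blast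
  show ?thesis
    by (rule that[OF J(1) W unit]) (use J(2) in \<open>auto simp: determines_def\<close>)
qed

lemma echelon_basis_exists:
  fixes B :: "(nat \<Rightarrow> 'a::field) set"
  assumes B: "fvs.subspace B" "B \<subseteq> vecs N"
  obtains J W where "finite J" "card J \<le> fvs.dim B" "\<And>j. j \<in> J \<Longrightarrow> W j \<in> B"
    "\<And>j j'. j \<in> J \<Longrightarrow> j' \<in> J \<Longrightarrow> W j j' = (if j' = j then 1 else 0)"
    "\<And>v. v \<in> B \<Longrightarrow> v = (\<Sum>j\<in>J. vscale (v j) (W j))"
proof -
  obtain J W where J: "finite J" and W: "\<And>j. j \<in> J \<Longrightarrow> W j \<in> B"
    and unit: "\<And>j j'. j \<in> J \<Longrightarrow> j' \<in> J \<Longrightarrow> W j j' = (if j' = j then 1 else 0)"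
    and determines: "\<And>w. w \<in> B \<Longrightarrow> \<forall>j\<in>J. w j = 0 \<Longrightarrow> w = 0"
    by (rule pivot_vectors_exist[OF B]) blast
  have pick: "(\<Sum>j\<in>J. c j * W j j') = c j'" if "j' \<in> J" for c j'
  proof -
    have "(\<Sum>j\<in>J. c j * W j j') = (\<Sum>j\<in>J. if j = j' then c j else 0)"
      using that by (intro sum.cong) (auto simp: unit)
    then show ?thesis using that J by simp
  qed
  have expand: "v = (\<Sum>j\<in>J. vscale (v j) (W j))" if v: "v \<in> B" for v
  proof -
    have "v - (\<Sum>j\<in>J. vscale (v j) (W j)) \<in> B"
      using v W
      by (intro fvs.subspace_diff[OF B(1)] fvs.subspace_sum[OF B(1)] fvs.subspace_scale[OF B(1)])
    moreover have "\<forall>j'\<in>J. (v - (\<Sum>j\<in>J. vscale (v j) (W j))) j' = 0"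
      by (simp add: vscale_sum_apply pick)
    ultimately have "v - (\<Sum>j\<in>J. vscale (v j) (W j)) = 0" by (rule determines)
    then show ?thesis by (rule right_minus_eq[THEN iffD1])
  qed
  have inj: "inj_on W J"
    by (rule inj_onI) (metis unit zero_neq_one)
  have "fvs.independent (W ` J)"
  proof (rule fvs.independent_if_scalars_zero)
    fix c w assume sum: "(\<Sum>x\<in>W ` J. vscale (c x) x) = 0" and "w \<in> W ` J"
    then obtain j' where j': "j' \<in> J" "w = W j'" by blast
    have "0 = (\<Sum>j\<in>J. vscale (c (W j)) (W j)) j'"
      using sum by (simp add: sum.reindex[OF inj])
    then show "c w = 0" using pick[OF j'(1)] j'(2) by (simp add: vscale_sum_apply)
  qed (use J in simp)
  then have "card J \<le> fvs.dim B"
    using fvs.finitely_spanned_independent_card_le_dim[OF finitely_spanned_vecs[OF B(2)]] W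
      card_image[OF inj] by (metis image_subset_iff)
  with J W unit expand show ?thesis using that by blast
qed

section \<open>Rank weights in Galois closed subspaces\<close>

lemma Fq_dim_le:
  assumes "\<And>S. S \<subseteq> X \<Longrightarrow> Fq_indep q S \<Longrightarrow> card S \<le> t"
  shows "Fq_dim q (X :: 'a::{field,finite} set) \<le> t"
proof -
  have "Fq_indep q {}" by (simp add: Fq_indep_def)
  moreover have "finite {card S |S. S \<subseteq> X \<and> Fq_indep q S}"
    by (rule finite_subset[of _ "card ` Pow X"]) auto
  ultimately show ?thesis unfolding Fq_dim_def using assms by (subst Max_le_iff) auto
qed

lemma Fq_dim_mono: "X \<subseteq> Y \<Longrightarrow> Fq_dim q X \<le> Fq_dim q (Y :: 'a::{field,finite} set)"
  unfolding Fq_dim_def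
  by (rule Max_mono)
    (auto intro: finite_subset[of _ "card ` Pow Y"] exI[of _ "{}"] simp: Fq_indep_def)

locale frobenius_power =
  fixes q :: nat
  assumes power_of_char: "\<exists>e. q = CHAR('a::{field,finite}) ^ e"
begin

lemma prime_char: "prime CHAR('a)"
  by (intro prime_CHAR_semidom finite_imp_CHAR_pos) simp

lemma q_pos: "0 < q"
  using power_of_char prime_char prime_gt_0_nat by auto

lemma power_q_add: "((x::'a) + y) ^ q = x ^ q + y ^ q"
  using power_of_char freshmans_dream'[OF prime_char] by blast

lemma power_q_sum: "(\<Sum>i\<in>A. f i :: 'a) ^ q = (\<Sum>i\<in>A. f i ^ q)"
  using power_of_char freshmans_dream_sum'[OF prime_char] by blast

definition Fq :: "'a set" where
  "Fq = {x. x ^ q = x}"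

lemma zero_in_Fq [simp]: "0 \<in> Fq"
  using q_pos by (simp add: Fq_def)

lemma one_in_Fq [simp]: "1 \<in> Fq"
  by (simp add: Fq_def)

lemma Fq_diff: "a \<in> Fq \<Longrightarrow> b \<in> Fq \<Longrightarrow> a - b \<in> Fq"
  using power_q_add[of "a - b" b] by (auto simp: Fq_def eq_diff_eq)

lemma Fq_mult: "a \<in> Fq \<Longrightarrow> b \<in> Fq \<Longrightarrow> a * b \<in> Fq"
  by (simp add: Fq_def power_mult_distrib)

lemma Fq_sum: "(\<And>i. i \<in> A \<Longrightarrow> f i \<in> Fq) \<Longrightarrow> (\<Sum>i\<in>A. f i) \<in> Fq"
  by (simp add: Fq_def power_q_sum)

lemma inj_on_Fq_combination:
  assumes "Fq_indep q S"
  shows "inj_on (\<lambda>c. \<Sum>x\<in>S. c x * x) (S \<rightarrow>\<^sub>E Fq)"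
proof (rule inj_onI)
  fix c c' assume c: "c \<in> S \<rightarrow>\<^sub>E Fq" and c': "c' \<in> S \<rightarrow>\<^sub>E Fq"
    and "(\<Sum>x\<in>S. c x * x) = (\<Sum>x\<in>S. c' x * x)"
  then have "(\<Sum>x\<in>S. (c x - c' x) * x) = 0"
    by (simp add: algebra_simps sum_subtractf)
  moreover have "\<forall>x\<in>S. (c x - c' x) ^ q = c x - c' x"
    using c c' Fq_diff by (auto simp: Fq_def)
  ultimately have "\<forall>x\<in>S. c x - c' x = 0"
    using assms[unfolded Fq_indep_def, THEN conjunct2, rule_format, of "\<lambda>x. c x - c' x"] by blast
  then show "c = c'" using c c' by (intro PiE_ext) auto
qed

text \<open>Counting argument: the \<open>card Fq ^ card S\<close> combinations of \<open>S\<close> are distinct and lie among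
  the \<open>card Fq ^ card J\<close> combinations of \<open>y ` J\<close>.\<close>

lemma Fq_indep_card_le:
  fixes S :: "'a set" and y :: "nat \<Rightarrow> 'a"
  assumes "finite J" and indep: "Fq_indep q S"
    and comb: "\<And>x. x \<in> S \<Longrightarrow> \<exists>a. (\<forall>j\<in>J. a j \<in> Fq) \<and> x = (\<Sum>j\<in>J. a j * y j)"
  shows "card S \<le> card J"
proof -
  have "finite S" using indep by (simp add: Fq_indep_def)
  obtain a where a: "\<And>x. x \<in> S \<Longrightarrow> (\<forall>j\<in>J. a x j \<in> Fq) \<and> x = (\<Sum>j\<in>J. a x j * y j)"
    using comb by metis
  define comb_S where "comb_S c = (\<Sum>x\<in>S. c x * x)" for c
  define comb_J where "comb_J e = (\<Sum>j\<in>J. e j * y j)" for e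
  have image: "comb_S ` (S \<rightarrow>\<^sub>E Fq) \<subseteq> comb_J ` (J \<rightarrow>\<^sub>E Fq)"
  proof
    fix z assume "z \<in> comb_S ` (S \<rightarrow>\<^sub>E Fq)"
    then obtain c where c: "c \<in> S \<rightarrow>\<^sub>E Fq" and z: "z = comb_S c" by blast
    define e where "e = restrict (\<lambda>j. \<Sum>x\<in>S. c x * a x j) J"
    have "e \<in> J \<rightarrow>\<^sub>E Fq" unfolding e_def using c a by (auto intro!: Fq_sum Fq_mult)
    moreover have "comb_J e = (\<Sum>x\<in>S. c x * (\<Sum>j\<in>J. a x j * y j))"
      unfolding comb_J_def e_def
      by (simp add: sum_distrib_left sum_distrib_right mult.assoc sum.swap[of _ J S])
    then have "comb_J e = z" using a by (simp add: z comb_S_def)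
    ultimately show "z \<in> comb_J ` (J \<rightarrow>\<^sub>E Fq)" by blast
  qed
  have "card (S \<rightarrow>\<^sub>E Fq) = card (comb_S ` (S \<rightarrow>\<^sub>E Fq))"
    using card_image[OF inj_on_Fq_combination[OF indep]] by (simp add: comb_S_def)
  also have "\<dots> \<le> card (comb_J ` (J \<rightarrow>\<^sub>E Fq))"
    using image by (intro card_mono) auto
  also have "\<dots> \<le> card (J \<rightarrow>\<^sub>E Fq)"
    by (intro card_image_le finite_PiE \<open>finite J\<close>) simp
  finally have "card Fq ^ card S \<le> card Fq ^ card J"
    by (simp add: card_PiE \<open>finite S\<close> assms(1))
  moreover have "1 < card Fq"
    using card_mono[of Fq "{0, 1}"] by simp
  ultimately show ?thesis using power_le_imp_le_exp by blast
qed

lemma rank_weight_le_dim: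
  fixes B :: "(nat \<Rightarrow> 'a) set"
  assumes B: "fvs.subspace B" "B \<subseteq> vecs N" "galois_closed q B" and "v \<in> B"
  shows "rank_weight q N v \<le> fvs.dim B"
proof -
  obtain J W where J: "finite J" "card J \<le> fvs.dim B" and W: "\<And>j. j \<in> J \<Longrightarrow> W j \<in> B"
    and unit: "\<And>j j'. j \<in> J \<Longrightarrow> j' \<in> J \<Longrightarrow> W j j' = (if j' = j then 1 else 0)"
    and expand: "\<And>v. v \<in> B \<Longrightarrow> v = (\<Sum>j\<in>J. vscale (v j) (W j))"
    using echelon_basis_exists[OF B(1,2)] by blast
  \<comment> \<open>Frobenius fixes the pivot entries 0 and 1 of \<open>W j\<close>, so expanding \<open>frob q (W j) \<in> B\<close>
    in the echelon basis gives back \<open>W j\<close>.\<close>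
  have rational: "W j l \<in> Fq" if j: "j \<in> J" for j l
  proof -
    have "frob q (W j) \<in> B" using B(3) W[OF j] by (simp add: galois_closed_def)
    then have "frob q (W j) = (\<Sum>j'\<in>J. vscale (frob q (W j) j') (W j'))" by (rule expand)
    also have "\<dots> = (\<Sum>j'\<in>J. if j' = j then W j' else 0)"
      using j q_pos by (intro sum.cong) (auto simp: frob_def unit)
    also have "\<dots> = W j" using j J(1) by simp
    finally show ?thesis by (auto simp: Fq_def frob_def fun_eq_iff)
  qed
  have "card S \<le> card J" if S: "S \<subseteq> v ` {..<N}" "Fq_indep q S" for S
  proof (rule Fq_indep_card_le[OF J(1) S(2)])
    fix x assume "x \<in> S"
    then obtain l where "x = v l" using S(1) by blast
    moreover have "v l = (\<Sum>j\<in>J. vscale (v j) (W j)) l"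
      using expand[OF \<open>v \<in> B\<close>] by (rule arg_cong)
    ultimately have "x = (\<Sum>j\<in>J. W j l * v j)"
      by (simp add: vscale_sum_apply mult.commute)
    then show "\<exists>a. (\<forall>j\<in>J. a j \<in> Fq) \<and> x = (\<Sum>j\<in>J. a j * v j)"
      using rational by (intro exI[of _ "\<lambda>j. W j l"]) auto
  qed
  then show ?thesis unfolding rank_weight_def by (meson Fq_dim_le J(2) order_trans)
qed

lemma galois_closed_coordinate_hyperplane:
  "galois_closed q B \<Longrightarrow> galois_closed q {x \<in> B. x l = (0::'a)}"
  using q_pos by (simp add: galois_closed_def frob_def)

lemma weight_add_le_dim_galois_closed:
  fixes B C :: "(nat \<Rightarrow> 'a) set"
  assumes C: "fvs.subspace C" and weight: "\<And>c. c \<in> C \<Longrightarrow> c \<noteq> 0 \<Longrightarrow> \<delta> \<le> rank_weight q N c"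
    and B: "fvs.subspace B" "B \<subseteq> vecs N" "galois_closed q B"
    and "0 < j" "j \<le> fvs.dim (B \<inter> C)"
  shows "\<delta> + j \<le> fvs.dim B + 1"
  using \<open>0 < j\<close> B \<open>j \<le> fvs.dim (B \<inter> C)\<close>
proof (induction j arbitrary: B rule: nat_induct_non_zero)
  case 1
  then obtain c where "c \<in> B \<inter> C" "c \<noteq> 0" using fvs.ex_nonzero_if_dim_pos[of "B \<inter> C"] by auto
  then show ?case using weight rank_weight_le_dim[OF "1.prems"(1-3)] by fastforce
next
  case (Suc j)
  then obtain c where c: "c \<in> B \<inter> C" "c \<noteq> 0" using fvs.ex_nonzero_if_dim_pos[of "B \<inter> C"] by auto
  then obtain l where l: "c l \<noteq> 0" by (auto simp: fun_eq_iff)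
  \<comment> \<open>Cutting by the coordinate hyperplane \<open>x l = 0\<close> loses exactly one dimension of \<open>B\<close>
    and at most one of \<open>B \<inter> C\<close>.\<close>
  define B' where "B' = {x \<in> B. x l = 0}"
  have B': "fvs.subspace B'" "B' \<subseteq> vecs N" "galois_closed q B'"
    using Suc.prems subspace_coordinate_hyperplane galois_closed_coordinate_hyperplane
    by (auto simp: B'_def)
  have "B' \<inter> C = {x \<in> B \<inter> C. x l = 0}" by (auto simp: B'_def)
  then have "fvs.dim (B \<inter> C) \<le> fvs.dim (B' \<inter> C) + 1"
    using dim_coordinate_hyperplane(1)[of "B \<inter> C" N l] fvs.subspace_inter[OF Suc.prems(1) C]
      Suc.prems(2) by auto
  then have "\<delta> + j \<le> fvs.dim B' + 1" using Suc.IH[OF B'] Suc.prems(4) by simp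
  moreover have "fvs.dim B = fvs.dim B' + 1"
    using dim_coordinate_hyperplane(2)[OF Suc.prems(1,2), where c = c and l = l] c(1) l
    by (simp add: B'_def)
  ultimately show ?case by simp
qed

end

lemma frobenius_power_if_card:
  assumes "prime_power q" "card (UNIV :: 'a::{field,finite} set) = q ^ m" "0 < m"
  shows "frobenius_power TYPE('a) q"
proof -
  obtain p e where pe: "prime p" "q = p ^ e" using assms(1) prime_power_def by blast
  have char_prime: "prime CHAR('a)" by (intro prime_CHAR_semidom finite_imp_CHAR_pos) simp
  have "CHAR('a) dvd p ^ (e * m)" using CHAR_dvd_CARD[where 'a='a] assms(2) pe(2)
    by (simp add: power_mult)
  then have "CHAR('a) = p" using char_prime pe(1) prime_dvd_power primes_dvd_imp_eq by blast
  then show ?thesis using pe(2) by (unfold_locales) blast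
qed

section \<open>Minimum distance and generalized rank weights\<close>

lemma rank_weight_le_length: "rank_weight q N (v :: nat \<Rightarrow> 'a::{field,finite}) \<le> N"
  unfolding rank_weight_def
proof (rule Fq_dim_le)
  fix S assume "S \<subseteq> v ` {..<N}"
  then have "card S \<le> card (v ` {..<N})" by (intro card_mono) auto
  also have "\<dots> \<le> N" using card_image_le[of "{..<N}" v] by simp
  finally show "card S \<le> N" .
qed

lemma min_rank_dist_le:
  assumes "u \<in> C" "u \<noteq> 0"
  shows "min_rank_dist q N C \<le> rank_weight q N (u :: nat \<Rightarrow> 'a::{field,finite})"
  unfolding min_rank_dist_def
  by (rule Min_le) (use assms rank_weight_le_length in \<open>auto intro: finite_subset[of _ "{..N}"]\<close>)

lemma rank_weight_ge_if_is_code_d: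
  assumes "is_code_d q N k d C" "c \<in> C" "c \<noteq> 0"
  shows "d \<le> rank_weight q N (c :: nat \<Rightarrow> 'a::{field,finite})"
  using min_rank_dist_le[OF assms(2,3), where q = q and N = N] assms(1) by (simp add: is_code_d_def)

lemma gen_rank_weight_eqI:
  fixes C A0 :: "(nat \<Rightarrow> 'a::{field,finite}) set"
  assumes "fvs.subspace A0" "A0 \<subseteq> vecs N" "galois_closed q A0" "j \<le> fvs.dim (A0 \<inter> C)"
    and "fvs.dim A0 \<le> d"
    and "\<And>A. fvs.subspace A \<Longrightarrow> A \<subseteq> vecs N \<Longrightarrow> galois_closed q A \<Longrightarrow> j \<le> fvs.dim (A \<inter> C) \<Longrightarrow>
      d \<le> fvs.dim A"
  shows "gen_rank_weight q N C j = d"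
proof -
  define G where "G = {fvs.dim A | A. fvs.subspace A \<and> A \<subseteq> vecs N \<and> galois_closed q A \<and>
    fvs.dim (A \<inter> C) \<ge> j}"
  have "finite G"
    by (rule finite_subset[of _ "{..N}"]) (auto simp: G_def dest: dim_le_if_subset_vecs)
  moreover have "fvs.dim A0 \<in> G" using assms(1-4) G_def by blast
  ultimately have "Min G \<le> d" using assms(5) Min_le order_trans by blast
  moreover have "d \<le> Min G" using \<open>finite G\<close> \<open>fvs.dim A0 \<in> G\<close> assms(6)
    by (subst Min_ge_iff) (auto simp: G_def)
  ultimately show ?thesis unfolding gen_rank_weight_def G_def by simp
qed

section \<open>Direct sums of codes\<close>

definition snd_block :: "nat \<Rightarrow> (nat \<Rightarrow> 'a) \<Rightarrow> nat \<Rightarrow> 'a" where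
  "snd_block n w = (\<lambda>i. w (i + n))"

lemma snd_block_concat_vec: "snd_block n (concat_vec n u v) = v"
  by (simp add: snd_block_def concat_vec_def)

lemma linear_snd_block: "Vector_Spaces.linear vscale vscale (snd_block n :: (nat \<Rightarrow> 'a::field) \<Rightarrow> _)"
  by (rule fvs_linearI) (simp_all add: snd_block_def vscale_def fun_eq_iff)

lemma linear_concat_vec_zero:
  "Vector_Spaces.linear vscale vscale (\<lambda>u. concat_vec n u (0 :: nat \<Rightarrow> 'a::field))"
  by (rule fvs_linearI) (simp_all add: concat_vec_def vscale_def fun_eq_iff)

lemma concat_vec_add: "concat_vec n u v + concat_vec n u' v' = concat_vec n (u + u') (v + v')"
  by (auto simp: concat_vec_def)

lemma concat_vec_vscale: "vscale c (concat_vec n u v) = concat_vec n (vscale c u) (vscale c v)"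
  by (auto simp: concat_vec_def vscale_def)

lemma concat_vec_zero: "concat_vec n 0 0 = 0"
  by (auto simp: concat_vec_def)

lemma subspace_code_dsum:
  assumes U: "fvs.subspace U" and V: "fvs.subspace (V :: (nat \<Rightarrow> 'a::field) set)"
  shows "fvs.subspace (code_dsum n U V)"
  unfolding fvs.subspace_def
proof (intro conjI ballI allI)
  show "0 \<in> code_dsum n U V"
    using fvs.subspace_0[OF U] fvs.subspace_0[OF V] concat_vec_zero by (force simp: code_dsum_def)
next
  fix x y assume "x \<in> code_dsum n U V" "y \<in> code_dsum n U V"
  then show "x + y \<in> code_dsum n U V"
    using fvs.subspace_add[OF U] fvs.subspace_add[OF V]
    by (fastforce simp: code_dsum_def concat_vec_add)
next
  fix c x assume "x \<in> code_dsum n U V"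
  then show "vscale c x \<in> code_dsum n U V"
    using fvs.subspace_scale[OF U] fvs.subspace_scale[OF V]
    by (fastforce simp: code_dsum_def concat_vec_vscale)
qed

lemma code_dsum_subset_vecs: "U \<subseteq> vecs n \<Longrightarrow> V \<subseteq> vecs n \<Longrightarrow> code_dsum n U V \<subseteq> vecs (2 * n)"
  by (auto simp: code_dsum_def concat_vec_def vecs_def)

lemma kernel_snd_block_code_dsum:
  "0 \<in> V \<Longrightarrow> {x \<in> code_dsum n U V. snd_block n x = 0} = (\<lambda>u. concat_vec n u 0) ` U"
  by (auto simp: code_dsum_def snd_block_concat_vec)

lemma image_snd_block_code_dsum: "0 \<in> U \<Longrightarrow> snd_block n ` code_dsum n U V = V"
  by (force simp: code_dsum_def snd_block_concat_vec)

lemma dim_kernel_snd_block_code_dsum: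
  fixes U V :: "(nat \<Rightarrow> 'a::field) set"
  assumes U: "fvs.subspace U" "U \<subseteq> vecs n" and "0 \<in> V"
  shows "fvs.dim {x \<in> code_dsum n U V. snd_block n x = 0} = fvs.dim U"
proof -
  have "u = 0" if "u \<in> U" "concat_vec n u 0 = 0" for u
  proof
    fix i
    have "concat_vec n u 0 i = 0" using that(2) by simp
    then show "u i = 0 i" using that(1) U(2) by (cases "i < n") (auto simp: vecs_def concat_vec_def)
  qed
  then have "{u \<in> U. concat_vec n u 0 = 0} \<subseteq> {0}" by blast
  then have "fvs.dim {u \<in> U. concat_vec n u 0 = 0} = 0"
    by (rule fvs.dim_eq_0_if_subset_zero)
  then show ?thesis
    using fvs_pair.rank_nullity[OF linear_concat_vec_zero[of n] U(1) finitely_spanned_vecs[OF U(2)]]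
      kernel_snd_block_code_dsum[OF \<open>0 \<in> V\<close>] by simp
qed

lemma dim_code_dsum:
  fixes U V :: "(nat \<Rightarrow> 'a::field) set"
  assumes U: "fvs.subspace U" "U \<subseteq> vecs n" and V: "fvs.subspace V" "V \<subseteq> vecs n"
  shows "fvs.dim (code_dsum n U V) = fvs.dim U + fvs.dim V"
  using fvs_pair.rank_nullity[OF linear_snd_block[of n] subspace_code_dsum[OF U(1) V(1)]
      finitely_spanned_vecs[OF code_dsum_subset_vecs[OF U(2) V(2)]]]
    dim_kernel_snd_block_code_dsum[OF U fvs.subspace_0[OF V(1)]]
    image_snd_block_code_dsum[OF fvs.subspace_0[OF U(1)]]
  by simp

lemma rank_weight_concat_vec:
  fixes u v :: "nat \<Rightarrow> 'a::{field,finite}"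
  shows "rank_weight q n u \<le> rank_weight q (2 * n) (concat_vec n u v)"
    and "rank_weight q n v \<le> rank_weight q (2 * n) (concat_vec n u v)"
proof -
  have "u ` {..<n} \<subseteq> concat_vec n u v ` {..<2 * n}"
    by (auto simp: concat_vec_def image_iff intro: bexI[of _ "_ :: nat"])
  then show "rank_weight q n u \<le> rank_weight q (2 * n) (concat_vec n u v)"
    unfolding rank_weight_def by (rule Fq_dim_mono)
  have "v ` {..<n} \<subseteq> concat_vec n u v ` {..<2 * n}"
  proof
    fix y assume "y \<in> v ` {..<n}"
    then obtain i where "i < n" "y = v i" by blast
    then show "y \<in> concat_vec n u v ` {..<2 * n}"
      by (intro image_eqI[of _ _ "i + n"]) (auto simp: concat_vec_def)
  qed
  then show "rank_weight q n v \<le> rank_weight q (2 * n) (concat_vec n u v)"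
    unfolding rank_weight_def by (rule Fq_dim_mono)
qed

lemma weight_code_dsum:
  fixes U V :: "(nat \<Rightarrow> 'a::{field,finite}) set"
  assumes "\<And>u. u \<in> U \<Longrightarrow> u \<noteq> 0 \<Longrightarrow> \<delta> \<le> rank_weight q n u"
    and "\<And>v. v \<in> V \<Longrightarrow> v \<noteq> 0 \<Longrightarrow> \<delta> \<le> rank_weight q n v"
    and "x \<in> code_dsum n U V" "x \<noteq> 0"
  shows "\<delta> \<le> rank_weight q (2 * n) x"
proof -
  obtain u v where x: "x = concat_vec n u v" "u \<in> U" "v \<in> V"
    using assms(3) by (auto simp: code_dsum_def)
  have "u \<noteq> 0 \<or> v \<noteq> 0" using x(1) assms(4) concat_vec_zero by auto
  then show ?thesis
    using assms(1,2) x rank_weight_concat_vec[where q = q and n = n and u = u and v = v]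
    by (meson le_trans)
qed

lemma galois_closed_kernel_snd_block:
  "0 < q \<Longrightarrow> galois_closed q A \<Longrightarrow> galois_closed q {x \<in> A. snd_block n x = (0 :: nat \<Rightarrow> 'a::field)}"
  by (simp add: galois_closed_def snd_block_def frob_def fun_eq_iff)

lemma galois_closed_image_snd_block:
  assumes "galois_closed q A"
  shows "galois_closed q (snd_block n ` (A :: (nat \<Rightarrow> 'a::field) set))"
proof -
  have "frob q (snd_block n x) = snd_block n (frob q x)" for x :: "nat \<Rightarrow> 'a"
    by (simp add: frob_def snd_block_def)
  then show ?thesis using assms by (auto simp: galois_closed_def)
qed

lemma is_code_code_dsum:
  assumes "is_code n k1 C1" "is_code n k2 C2"
  shows "is_code (2 * n) (k1 + k2) (code_dsum n C1 C2)"
proof -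
  have C1: "fvs.subspace C1" "C1 \<subseteq> vecs n" "fvs.dim C1 = k1"
    and C2: "fvs.subspace C2" "C2 \<subseteq> vecs n" "fvs.dim C2 = k2"
    using assms by (simp_all add: is_code_def)
  then show ?thesis
    using subspace_code_dsum[OF C1(1) C2(1)] code_dsum_subset_vecs[OF C1(2) C2(2)]
      dim_code_dsum[OF C1(1,2) C2(1,2)] by (simp add: is_code_def)
qed

lemma galois_closed_snd_block_split:
  fixes A :: "(nat \<Rightarrow> 'a::field) set"
  assumes A: "fvs.subspace A" "A \<subseteq> vecs (2 * n)" "galois_closed q A" and "0 < q"
  defines "A1 \<equiv> {x \<in> A. snd_block n x = 0}" and "A2 \<equiv> snd_block n ` A"
  shows "fvs.subspace A1" "A1 \<subseteq> vecs (2 * n)" "galois_closed q A1"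
    and "fvs.subspace A2" "A2 \<subseteq> vecs n" "galois_closed q A2"
    and "fvs.dim A = fvs.dim A1 + fvs.dim A2"
proof -
  have "A1 = A \<inter> {x. snd_block n x = 0}" by (auto simp: A1_def)
  then show "fvs.subspace A1"
    using fvs.subspace_inter[OF A(1) fvs_pair.linear_subspace_kernel[OF linear_snd_block]] by simp
  show "A1 \<subseteq> vecs (2 * n)" using A(2) by (auto simp: A1_def)
  show "galois_closed q A1"
    unfolding A1_def by (rule galois_closed_kernel_snd_block[OF \<open>0 < q\<close> A(3)])
  show "fvs.subspace A2" "A2 \<subseteq> vecs n" "galois_closed q A2"
    using fvs_pair.linear_subspace_image[OF linear_snd_block A(1)] A(2)
      galois_closed_image_snd_block[OF A(3)] by (auto simp: A2_def snd_block_def vecs_def)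
  show "fvs.dim A = fvs.dim A1 + fvs.dim A2"
    using fvs_pair.rank_nullity[OF linear_snd_block A(1) finitely_spanned_vecs[OF A(2)]]
    by (simp add: A1_def A2_def)
qed

lemma dim_inter_code_dsum_split:
  fixes A C1 C2 :: "(nat \<Rightarrow> 'a::field) set"
  assumes C1: "fvs.subspace C1" "C1 \<subseteq> vecs n" and C2: "fvs.subspace C2" "C2 \<subseteq> vecs n"
    and A: "fvs.subspace A" "A \<subseteq> vecs (2 * n)"
  obtains a b where "fvs.dim (A \<inter> code_dsum n C1 C2) = a + b"
    and "a \<le> fvs.dim ({x \<in> A. snd_block n x = 0} \<inter> code_dsum n C1 C2)" "a \<le> fvs.dim C1"
    and "b \<le> fvs.dim (snd_block n ` A \<inter> C2)" "b \<le> fvs.dim C2"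
proof -
  define C where "C = code_dsum n C1 C2"
  define D where "D = A \<inter> C"
  have C: "fvs.subspace C" "C \<subseteq> vecs (2 * n)" "snd_block n ` C = C2"
    using subspace_code_dsum[OF C1(1) C2(1)] code_dsum_subset_vecs[OF C1(2) C2(2)]
      image_snd_block_code_dsum[OF fvs.subspace_0[OF C1(1)]] by (auto simp: C_def)
  have D: "fvs.subspace D" "D \<subseteq> vecs (2 * n)"
    using fvs.subspace_inter[OF A(1) C(1)] A(2) by (auto simp: D_def)
  show ?thesis
  proof (rule that)
    show "fvs.dim (A \<inter> code_dsum n C1 C2)
        = fvs.dim {x \<in> D. snd_block n x = 0} + fvs.dim (snd_block n ` D)"
      using fvs_pair.rank_nullity[OF linear_snd_block D(1) finitely_spanned_vecs[OF D(2)]]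
      by (simp only: C_def[symmetric] D_def[symmetric])
    show "fvs.dim {x \<in> D. snd_block n x = 0}
        \<le> fvs.dim ({x \<in> A. snd_block n x = 0} \<inter> code_dsum n C1 C2)"
      using A(2) by (intro fvs.finitely_spanned_dim_subset finitely_spanned_vecs[of _ "2 * n"])
        (auto simp: C_def D_def)
    have "fvs.dim {x \<in> D. snd_block n x = 0} \<le> fvs.dim {x \<in> C. snd_block n x = 0}"
      using C(2) by (intro fvs.finitely_spanned_dim_subset finitely_spanned_vecs[of _ "2 * n"])
        (auto simp: D_def)
    then show "fvs.dim {x \<in> D. snd_block n x = 0} \<le> fvs.dim C1"
      using dim_kernel_snd_block_code_dsum[OF C1 fvs.subspace_0[OF C2(1)]] by (simp add: C_def)
    show "fvs.dim (snd_block n ` D) \<le> fvs.dim (snd_block n ` A \<inter> C2)"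
      using C2(2) C(3) by (intro fvs.finitely_spanned_dim_subset finitely_spanned_vecs[of _ n])
        (auto simp: D_def)
    show "fvs.dim (snd_block n ` D) \<le> fvs.dim C2"
      using C2(2) C(3) by (intro fvs.finitely_spanned_dim_subset finitely_spanned_vecs[of _ n])
        (auto simp: D_def)
  qed
qed

lemma dim_inter_vecs_code_dsum:
  fixes C1 C2 :: "(nat \<Rightarrow> 'a::field) set"
  assumes "is_code n k C1" "is_code n k C2"
  shows "(k - (n - t)) + (k - (2 * n - t)) \<le> fvs.dim (vecs t \<inter> code_dsum n C1 C2)"
proof -
  have C1: "fvs.subspace C1" "C1 \<subseteq> vecs n" "fvs.dim C1 = k"
    and C2: "fvs.subspace C2" "C2 \<subseteq> vecs n" "fvs.dim C2 = k"
    using assms by (auto simp: is_code_def)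
  have "k - (n - t) \<le> fvs.dim (C1 \<inter> vecs t)"
    using dim_le_dim_inter_vecs[OF C1(1,2), of t] C1(3) by simp
  moreover have "k - (2 * n - t) \<le> fvs.dim (C2 \<inter> vecs (t - n))"
    using dim_le_dim_inter_vecs[OF C2(1,2), of "t - n"] C2(3) by simp
  moreover have "fvs.dim (code_dsum n (C1 \<inter> vecs t) (C2 \<inter> vecs (t - n)))
      = fvs.dim (C1 \<inter> vecs t) + fvs.dim (C2 \<inter> vecs (t - n))"
    using C1 C2 by (intro dim_code_dsum) (auto intro: fvs.subspace_inter subspace_vecs)
  moreover have "code_dsum n (C1 \<inter> vecs t) (C2 \<inter> vecs (t - n)) \<subseteq> vecs t \<inter> code_dsum n C1 C2"
    by (auto simp: code_dsum_def concat_vec_def vecs_def)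
  then have "fvs.dim (code_dsum n (C1 \<inter> vecs t) (C2 \<inter> vecs (t - n)))
      \<le> fvs.dim (vecs t \<inter> code_dsum n C1 C2)"
    by (intro fvs.finitely_spanned_dim_subset finitely_spanned_vecs[of _ t]) auto
  ultimately show ?thesis by linarith
qed

context frobenius_power
begin

lemma dim_galois_closed_code_dsum_lower_bound:
  fixes C1 C2 A :: "(nat \<Rightarrow> 'a) set"
  assumes C1: "fvs.subspace C1" "C1 \<subseteq> vecs n" and C2: "fvs.subspace C2" "C2 \<subseteq> vecs n"
    and weight1: "\<And>c. c \<in> C1 \<Longrightarrow> c \<noteq> 0 \<Longrightarrow> \<delta> \<le> rank_weight q n c"
    and weight2: "\<And>c. c \<in> C2 \<Longrightarrow> c \<noteq> 0 \<Longrightarrow> \<delta> \<le> rank_weight q n c"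
    and A: "fvs.subspace A" "A \<subseteq> vecs (2 * n)" "galois_closed q A"
    and "0 < \<delta>" and i: "0 < i" "i \<le> fvs.dim (A \<inter> code_dsum n C1 C2)"
  shows "\<delta> + i \<le> fvs.dim A + 1"
    and "fvs.dim C1 < i \<Longrightarrow> fvs.dim C2 < i \<Longrightarrow> 2 * \<delta> + i \<le> fvs.dim A + 2"
proof -
  note A12 = galois_closed_snd_block_split[OF A q_pos]
  obtain a b where ab: "fvs.dim (A \<inter> code_dsum n C1 C2) = a + b"
    and a: "a \<le> fvs.dim ({x \<in> A. snd_block n x = 0} \<inter> code_dsum n C1 C2)" "a \<le> fvs.dim C1"
    and b: "b \<le> fvs.dim (snd_block n ` A \<inter> C2)" "b \<le> fvs.dim C2"
    using dim_inter_code_dsum_split[OF C1 C2 A(1,2)] .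
  have "a = 0 \<or> \<delta> + a \<le> fvs.dim {x \<in> A. snd_block n x = 0} + 1"
    using weight_add_le_dim_galois_closed[OF subspace_code_dsum[OF C1(1) C2(1)]
        weight_code_dsum[OF weight1 weight2] A12(1-3) _ a(1)] by (cases "a = 0") simp_all
  moreover have "b = 0 \<or> \<delta> + b \<le> fvs.dim (snd_block n ` A) + 1"
    using weight_add_le_dim_galois_closed[OF C2(1) weight2 A12(4-6) _ b(1)]
    by (cases "b = 0") simp_all
  ultimately show "\<delta> + i \<le> fvs.dim A + 1"
    and "fvs.dim C1 < i \<Longrightarrow> fvs.dim C2 < i \<Longrightarrow> 2 * \<delta> + i \<le> fvs.dim A + 2"
    using i ab a(2) b(2) A12(7) \<open>0 < \<delta>\<close> by linarith+
qed

lemma gen_rank_weight_code_dsum: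
  fixes C1 C2 :: "(nat \<Rightarrow> 'a) set"
  assumes codes: "is_code n k C1" "is_code n k C2"
    and weight1: "\<And>c. c \<in> C1 \<Longrightarrow> c \<noteq> 0 \<Longrightarrow> n - k + 1 \<le> rank_weight q n c"
    and weight2: "\<And>c. c \<in> C2 \<Longrightarrow> c \<noteq> 0 \<Longrightarrow> n - k + 1 \<le> rank_weight q n c"
    and "0 < i" "i \<le> 2 * k"
  shows "gen_rank_weight q (2 * n) (code_dsum n C1 C2) i
    = (if i \<le> k then n - k + i else 2 * n - 2 * k + i)"
proof -
  have C1: "fvs.subspace C1" "C1 \<subseteq> vecs n" "fvs.dim C1 = k"
    and C2: "fvs.subspace C2" "C2 \<subseteq> vecs n" "fvs.dim C2 = k"
    using codes by (simp_all add: is_code_def)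
  have "k \<le> n" using dim_le_if_subset_vecs[OF C1(2)] C1(3) by simp
  define t where "t = (if i \<le> k then n - k + i else 2 * n - 2 * k + i)"
  have "t \<le> 2 * n" using \<open>k \<le> n\<close> \<open>i \<le> 2 * k\<close> by (auto simp: t_def)
  have witness: "i \<le> k - (n - t) + (k - (2 * n - t))"
    using \<open>k \<le> n\<close> \<open>i \<le> 2 * k\<close> by (auto simp: t_def)
  show ?thesis
    unfolding t_def[symmetric]
  proof (rule gen_rank_weight_eqI[of "vecs t"])
    show "vecs t \<subseteq> vecs (2 * n)" using vecs_mono[OF \<open>t \<le> 2 * n\<close>] .
    show "i \<le> fvs.dim (vecs t \<inter> code_dsum n C1 C2)"
      using dim_inter_vecs_code_dsum[OF codes, of t] witness by linarith
    show "fvs.dim (vecs t) \<le> t" by (rule dim_le_if_subset_vecs) simp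
    fix A assume A: "fvs.subspace A" "A \<subseteq> vecs (2 * n)" "galois_closed q A"
      and i_le: "i \<le> fvs.dim (A \<inter> code_dsum n C1 C2)"
    note lower_bound = dim_galois_closed_code_dsum_lower_bound[OF C1(1,2) C2(1,2) weight1 weight2 A
        _ \<open>0 < i\<close> i_le]
    show "t \<le> fvs.dim A"
      using lower_bound C1(3) C2(3) \<open>k \<le> n\<close> by (auto simp: t_def)
  qed (simp_all add: subspace_vecs galois_closed_vecs q_pos)
qed

end

theorem proposition4p10:
  fixes q m n k :: nat
    and C1 C2 :: "(nat \<Rightarrow> 'a::{field,finite}) set"
  assumes "prime_power q"
    and "card (UNIV :: 'a set) = q ^ m"
    and "n > 0" and "k > 0" and "m > 0"
    and "is_MRD q m n k (n - k + 1) C1"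
    and "is_MRD q m n k (n - k + 1) C2"
  shows "is_code (2 * n) (2 * k) (code_dsum n C1 C2)
    \<and> (\<forall>i. 1 \<le> i \<and> i \<le> k \<longrightarrow> gen_rank_weight q (2 * n) (code_dsum n C1 C2) i = n - k + i)
    \<and> (\<forall>i. k + 1 \<le> i \<and> i \<le> 2 * k \<longrightarrow> gen_rank_weight q (2 * n) (code_dsum n C1 C2) i = 2 * n - 2 * k + i)"
proof -
  interpret frobenius_power q using frobenius_power_if_card[OF assms(1,2,5)] .
  have codes: "is_code_d q n k (n - k + 1) C1" "is_code_d q n k (n - k + 1) C2"
    using assms(6,7) by (simp_all add: is_MRD_def)
  then have "is_code n k C1" "is_code n k C2" by (simp_all add: is_code_d_def)
  note gen_weight = gen_rank_weight_code_dsum[OF this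
      rank_weight_ge_if_is_code_d[OF codes(1)] rank_weight_ge_if_is_code_d[OF codes(2)]]
  show ?thesis
    using is_code_code_dsum[OF \<open>is_code n k C1\<close> \<open>is_code n k C2\<close>] gen_weight by (simp add: mult_2)
qed

end
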